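(* Let $X$ be a $T_1$ topological space. (i) For every $\alpha\in X$, the maximal ideal $M_\alpha=\{f\in C_c(X)_F: f(\alpha)=0\}$ is generated by the idempotent $1-\chi_{\{\alpha\}}$. (ii) Every prime ideal of $C_c(X)_F$ which is not maximal is an essential ideal.
   Context: $C_c(X)_F$ denotes the set of all functions $f:X\to\mathbb{R}$ whose range is countable and whose set of points of discontinuity is finite; it is a commutative ring with unity under pointwise operations. $\chi_{\{\alpha\}}$ is the function equal to $1$ at $\alpha$ and $0$ elsewhere. An ideal is essential if it meets every nonzero ideal nontrivially. *)

theory Defs
  imports "HOL-Analysis.Analysis" "HOL-Algebra.Ideal"
begin

text \<open>The topological space X is the (T1) type 'a; functions X -> R are of type 'a => real.
  C_c(X)_F: countable range and finitely many points of discontinuity.\<close>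
definition CcF :: "('a::topological_space \<Rightarrow> real) set" where
  "CcF = {f. countable (range f) \<and> finite {x. \<not> (f \<longlongrightarrow> f x) (at x)}}"

definition CcF_ring :: "('a::topological_space \<Rightarrow> real) ring" where
  "CcF_ring = \<lparr>carrier = CcF, monoid.mult = (\<lambda>f g x. f x * g x), one = (\<lambda>x. 1),
      zero = (\<lambda>x. 0), add = (\<lambda>f g x. f x + g x)\<rparr>"

definition chi_singleton :: "'a \<Rightarrow> 'a \<Rightarrow> real" where
  "chi_singleton a = (\<lambda>x. if x = a then 1 else 0)"

definition essential_ideal :: "('b, 'm) ring_scheme \<Rightarrow> 'b set \<Rightarrow> bool" where
  "essential_ideal R I \<longleftrightarrow> ideal I R \<and>
     (\<forall>J. ideal J R \<and> J \<noteq> {\<zero>\<^bsub>R\<^esub>} \<longrightarrow> I \<inter> J \<noteq> {\<zero>\<^bsub>R\<^esub>})"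

end

theory Submission
  imports Defs
begin

text \<open>The functions in \<open>C\<^sub>c(X)\<^sub>F\<close> form a ring since countable ranges and finite sets of
  discontinuities are preserved by continuous binary operations. In a \<open>T\<^sub>1\<close> space every
  \<open>\<chi>\<^bsub>{\<alpha>}\<^esub>\<close> lies in the ring, being discontinuous at most at \<open>\<alpha>\<close>. Then
  \<open>f = f (1 - \<chi>\<^bsub>{\<alpha>}\<^esub>)\<close> whenever \<open>f \<alpha> = 0\<close>, which gives (i). For (ii), the product
  \<open>\<chi>\<^bsub>{\<alpha>}\<^esub> (1 - \<chi>\<^bsub>{\<alpha>}\<^esub>)\<close> vanishes, so a prime ideal either contains \<open>1 - \<chi>\<^bsub>{\<alpha>}\<^esub>\<close>, and then
  equals the maximal ideal \<open>M\<^sub>\<alpha>\<close>, or contains \<open>\<chi>\<^bsub>{\<alpha>}\<^esub>\<close>. A non-maximal prime thus contains all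
  \<open>\<chi>\<^bsub>{\<alpha>}\<^esub>\<close>, and multiplying a nonzero \<open>g\<close> with \<open>g \<alpha> \<noteq> 0\<close> by \<open>\<chi>\<^bsub>{\<alpha>}\<^esub>\<close> gives a nonzero
  element of the prime in any ideal containing \<open>g\<close>.\<close>

lemma CcF_const: "(\<lambda>x. c) \<in> CcF"
  unfolding CcF_def by (auto simp: image_def)

lemma CcF_binop:
  fixes h :: "real \<Rightarrow> real \<Rightarrow> real" and f g :: "'a::topological_space \<Rightarrow> real"
  assumes f: "f \<in> CcF" and g: "g \<in> CcF"
    and h_cont: "\<And>(F::'a filter) u v a b. (u \<longlongrightarrow> a) F \<Longrightarrow> (v \<longlongrightarrow> b) F \<Longrightarrow>
                   ((\<lambda>x. h (u x) (v x)) \<longlongrightarrow> h a b) F"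
  shows "(\<lambda>x. h (f x) (g x)) \<in> CcF"
proof -
  have "range (\<lambda>x. h (f x) (g x)) \<subseteq> case_prod h ` (range f \<times> range g)"
    by auto
  moreover have "countable (case_prod h ` (range f \<times> range g))"
    using f g unfolding CcF_def by auto
  ultimately have "countable (range (\<lambda>x. h (f x) (g x)))"
    using countable_subset by blast
  moreover have "{x. \<not> ((\<lambda>x. h (f x) (g x)) \<longlongrightarrow> h (f x) (g x)) (at x)} \<subseteq>
        {x. \<not> (f \<longlongrightarrow> f x) (at x)} \<union> {x. \<not> (g \<longlongrightarrow> g x) (at x)}"
    using h_cont by blast
  moreover have "finite ({x. \<not> (f \<longlongrightarrow> f x) (at x)} \<union> {x. \<not> (g \<longlongrightarrow> g x) (at x)})"
    using f g unfolding CcF_def by simp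
  ultimately show ?thesis
    unfolding CcF_def using finite_subset by blast
qed

lemma CcF_add: "f \<in> CcF \<Longrightarrow> g \<in> CcF \<Longrightarrow> (\<lambda>x. f x + g x) \<in> CcF"
  by (rule CcF_binop[where h="(+)"]) (assumption | rule tendsto_add)+

lemma CcF_diff: "f \<in> CcF \<Longrightarrow> g \<in> CcF \<Longrightarrow> (\<lambda>x. f x - g x) \<in> CcF"
  by (rule CcF_binop[where h="(-)"]) (assumption | rule tendsto_diff)+

lemma CcF_mult: "f \<in> CcF \<Longrightarrow> g \<in> CcF \<Longrightarrow> (\<lambda>x. f x * g x) \<in> CcF"
  by (rule CcF_binop[where h="(*)"]) (assumption | rule tendsto_mult)+

lemma CcF_uminus: "f \<in> CcF \<Longrightarrow> (\<lambda>x. - f x) \<in> CcF"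
  using CcF_diff[OF CcF_const[of 0]] by simp

lemma CcF_ring_simps [simp]:
  "carrier CcF_ring = CcF"
  "f \<otimes>\<^bsub>CcF_ring\<^esub> g = (\<lambda>x. f x * g x)"
  "f \<oplus>\<^bsub>CcF_ring\<^esub> g = (\<lambda>x. f x + g x)"
  "\<zero>\<^bsub>CcF_ring\<^esub> = (\<lambda>x. 0)"
  "\<one>\<^bsub>CcF_ring\<^esub> = (\<lambda>x. 1)"
  by (simp_all add: CcF_ring_def)

lemma cring_CcF_ring: "cring (CcF_ring :: ('a::topological_space \<Rightarrow> real) ring)"
proof (rule cringI)
  show "abelian_group (CcF_ring :: ('a \<Rightarrow> real) ring)"
  proof (rule abelian_groupI)
    fix f :: "'a \<Rightarrow> real"
    assume "f \<in> carrier CcF_ring"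
    then show "\<exists>g\<in>carrier CcF_ring. g \<oplus>\<^bsub>CcF_ring\<^esub> f = \<zero>\<^bsub>CcF_ring\<^esub>"
      by (intro bexI[of _ "\<lambda>x. - f x"]) (simp_all add: CcF_uminus)
  qed (simp_all add: CcF_add CcF_const add_ac)
  show "comm_monoid (CcF_ring :: ('a \<Rightarrow> real) ring)"
    by (rule comm_monoidI) (simp_all add: CcF_mult CcF_const mult_ac)
qed (simp add: distrib_right)

lemma chi_singleton_in_CcF: "chi_singleton (\<alpha>::'a::t1_space) \<in> CcF"
proof -
  have "range (chi_singleton \<alpha>) \<subseteq> {0, 1}"
    by (auto simp: chi_singleton_def)
  then have "countable (range (chi_singleton \<alpha>))"
    by (rule countable_subset) simp
  moreover have "(chi_singleton \<alpha> \<longlongrightarrow> chi_singleton \<alpha> x) (at x)" if "x \<noteq> \<alpha>" for x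
  proof (rule tendsto_eventually)
    have "eventually (\<lambda>y. y \<in> - {\<alpha>}) (at x)"
      using that by (intro eventually_at_in_open') auto
    then show "eventually (\<lambda>y. chi_singleton \<alpha> y = chi_singleton \<alpha> x) (at x)"
      by (rule eventually_mono) (use that in \<open>simp add: chi_singleton_def\<close>)
  qed
  then have "{x. \<not> (chi_singleton \<alpha> \<longlongrightarrow> chi_singleton \<alpha> x) (at x)} \<subseteq> {\<alpha>}"
    by blast
  then have "finite {x. \<not> (chi_singleton \<alpha> \<longlongrightarrow> chi_singleton \<alpha> x) (at x)}"
    by (rule finite_subset) simp
  ultimately show ?thesis
    unfolding CcF_def by simp
qed

lemma one_minus_chi_singleton_in_CcF: "(\<lambda>x. 1 - chi_singleton (\<alpha>::'a::t1_space) x) \<in> CcF"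
  by (rule CcF_diff[OF CcF_const chi_singleton_in_CcF])

lemma one_minus_chi_singleton_idem:
  "(\<lambda>x. 1 - chi_singleton \<alpha> x) \<otimes>\<^bsub>CcF_ring\<^esub> (\<lambda>x. 1 - chi_singleton \<alpha> x) =
   (\<lambda>x. 1 - chi_singleton \<alpha> x)"
  by (auto simp: chi_singleton_def)

lemma vanishing_ideal_eq_PIdl:
  "{f \<in> CcF. f \<alpha> = 0} = PIdl\<^bsub>CcF_ring\<^esub> (\<lambda>x. 1 - chi_singleton (\<alpha>::'a::t1_space) x)"
proof
  show "{f \<in> CcF. f \<alpha> = 0} \<subseteq> PIdl\<^bsub>CcF_ring\<^esub> (\<lambda>x. 1 - chi_singleton \<alpha> x)"
  proof
    fix f assume f: "f \<in> {f \<in> CcF. f \<alpha> = 0}"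
    then have "f = f \<otimes>\<^bsub>CcF_ring\<^esub> (\<lambda>x. 1 - chi_singleton \<alpha> x)"
      by (auto simp: chi_singleton_def)
    with f show "f \<in> PIdl\<^bsub>CcF_ring\<^esub> (\<lambda>x. 1 - chi_singleton \<alpha> x)"
      unfolding cgenideal_def by auto
  qed
  show "PIdl\<^bsub>CcF_ring\<^esub> (\<lambda>x. 1 - chi_singleton \<alpha> x) \<subseteq> {f \<in> CcF. f \<alpha> = 0}"
    unfolding cgenideal_def
    using CcF_mult one_minus_chi_singleton_in_CcF by (auto simp: chi_singleton_def)
qed

lemma ideal_vanishing: "ideal {f \<in> CcF. f (\<alpha>::'a::t1_space) = 0} CcF_ring"
proof -
  interpret cring "CcF_ring :: ('a \<Rightarrow> real) ring"
    by (rule cring_CcF_ring)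
  show ?thesis
    unfolding vanishing_ideal_eq_PIdl
    by (rule cgenideal_ideal) (simp add: one_minus_chi_singleton_in_CcF)
qed

lemma maximalideal_vanishing:
  "maximalideal {f \<in> CcF. f (\<alpha>::'a::t1_space) = 0} CcF_ring"
proof (rule maximalidealI)
  show "ideal {f \<in> CcF. f \<alpha> = 0} CcF_ring"
    by (rule ideal_vanishing)
  show "carrier CcF_ring \<noteq> {f \<in> CcF. f \<alpha> = 0}"
    using CcF_const[of 1] by auto
next
  fix J assume J: "ideal J CcF_ring" "{f \<in> CcF. f \<alpha> = 0} \<subseteq> J" "J \<subseteq> carrier CcF_ring"
  show "J = {f \<in> CcF. f \<alpha> = 0} \<or> J = carrier CcF_ring"
  proof (cases "J = {f \<in> CcF. f \<alpha> = 0}")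
    case False
    then obtain g where g: "g \<in> J" "g \<alpha> \<noteq> 0"
      using J by auto
    define h where "h = (\<lambda>x. 1 / g \<alpha> * g x)"
    have "(\<lambda>x. 1 / g \<alpha>) \<otimes>\<^bsub>CcF_ring\<^esub> g \<in> J"
      by (rule ideal.I_l_closed[OF J(1) g(1)]) (simp add: CcF_const)
    then have "h \<in> J"
      by (simp add: h_def)
    moreover have "(\<lambda>x. 1 - h x) \<in> J"
    proof -
      have "h \<in> CcF"
        using ideal.Icarr[OF J(1) \<open>h \<in> J\<close>] by simp
      then have "(\<lambda>x. 1 - h x) \<in> {f \<in> CcF. f \<alpha> = 0}"
        using g(2) CcF_diff[OF CcF_const] by (simp add: h_def)
      then show ?thesis
        using J(2) by blast
    qed
    ultimately have "h \<oplus>\<^bsub>CcF_ring\<^esub> (\<lambda>x. 1 - h x) \<in> J"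
      by (rule additive_subgroup.a_closed[OF ideal.axioms(1)[OF J(1)]])
    then have "\<one>\<^bsub>CcF_ring\<^esub> \<in> J"
      by simp
    then show ?thesis
      using ideal.one_imp_carrier[OF J(1)] by simp
  qed simp
qed

lemma chi_singleton_in_nonmaximal_prime:
  fixes P :: "('a::t1_space \<Rightarrow> real) set"
  assumes prime: "primeideal P CcF_ring" and not_max: "\<not> maximalideal P CcF_ring"
  shows "chi_singleton \<alpha> \<in> P"
proof (rule ccontr)
  interpret cring "CcF_ring :: ('a \<Rightarrow> real) ring"
    by (rule cring_CcF_ring)
  assume chi_notin: "chi_singleton \<alpha> \<notin> P"
  have P: "ideal P CcF_ring"
    using prime by (simp add: primeideal_def)
  have "chi_singleton \<alpha> \<otimes>\<^bsub>CcF_ring\<^esub> (\<lambda>x. 1 - chi_singleton \<alpha> x) = \<zero>\<^bsub>CcF_ring\<^esub>"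
    by (auto simp: chi_singleton_def)
  then have "chi_singleton \<alpha> \<otimes>\<^bsub>CcF_ring\<^esub> (\<lambda>x. 1 - chi_singleton \<alpha> x) \<in> P"
    using additive_subgroup.zero_closed[OF ideal.axioms(1)[OF P]] by simp
  then have "(\<lambda>x. 1 - chi_singleton \<alpha> x) \<in> P"
    using primeideal.I_prime[OF prime] chi_notin chi_singleton_in_CcF
      one_minus_chi_singleton_in_CcF by auto
  then have "{f \<in> CcF. f \<alpha> = 0} \<subseteq> P"
    unfolding vanishing_ideal_eq_PIdl by (rule cgenideal_minimal[OF P])
  then have "P = {f \<in> CcF. f \<alpha> = 0} \<or> P = carrier CcF_ring"
    using maximalideal.I_maximal[OF maximalideal_vanishing P] ideal.axioms(1)[OF P]
      additive_subgroup.a_subset by blast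
  then show False
    using primeideal.I_notcarr[OF prime] maximalideal_vanishing not_max by metis
qed

lemma essential_ideal_if_all_chi_singleton:
  fixes P :: "('a::topological_space \<Rightarrow> real) set"
  assumes P: "ideal P CcF_ring" and chi: "\<And>\<alpha>. chi_singleton \<alpha> \<in> P"
  shows "essential_ideal CcF_ring P"
  unfolding essential_ideal_def
proof (intro conjI allI impI P)
  fix J :: "('a \<Rightarrow> real) set"
  assume "ideal J CcF_ring \<and> J \<noteq> {\<zero>\<^bsub>CcF_ring\<^esub>}"
  then have J: "ideal J CcF_ring" and J_nonzero: "J \<noteq> {\<zero>\<^bsub>CcF_ring\<^esub>}"
    by auto
  obtain g where g: "g \<in> J" "g \<noteq> (\<lambda>x. 0)"
    using J_nonzero additive_subgroup.zero_closed[OF ideal.axioms(1)[OF J]] by auto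
  then obtain \<alpha> where g_\<alpha>: "g \<alpha> \<noteq> 0"
    by (auto simp: fun_eq_iff)
  have "g \<otimes>\<^bsub>CcF_ring\<^esub> chi_singleton \<alpha> \<in> P"
    using ideal.I_l_closed[OF P chi ideal.Icarr[OF J g(1)]] .
  moreover have "g \<otimes>\<^bsub>CcF_ring\<^esub> chi_singleton \<alpha> \<in> J"
    using ideal.I_r_closed[OF J g(1)] chi ideal.Icarr[OF P] by blast
  moreover have "g \<otimes>\<^bsub>CcF_ring\<^esub> chi_singleton \<alpha> \<noteq> \<zero>\<^bsub>CcF_ring\<^esub>"
    using g_\<alpha> by (auto simp: chi_singleton_def fun_eq_iff)
  ultimately show "P \<inter> J \<noteq> {\<zero>\<^bsub>CcF_ring\<^esub>}"
    by blast
qed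

theorem proposition3p18:
  fixes X_witness :: "'a::t1_space itself"
  shows "(\<forall>\<alpha>::'a. let M = {f \<in> CcF. f \<alpha> = 0}; e = (\<lambda>x. 1 - chi_singleton \<alpha> x) in
            maximalideal M CcF_ring \<and> e \<in> CcF \<and>
            e \<otimes>\<^bsub>CcF_ring\<^esub> e = e \<and> M = genideal CcF_ring {e})
       \<and> (\<forall>P :: ('a \<Rightarrow> real) set. primeideal P CcF_ring \<and> \<not> maximalideal P CcF_ring
            \<longrightarrow> essential_ideal CcF_ring P)"
proof (intro conjI allI impI)
  interpret cring "CcF_ring :: ('a \<Rightarrow> real) ring"
    by (rule cring_CcF_ring)
  fix \<alpha> :: 'a
  have "{f \<in> CcF. f \<alpha> = 0} = genideal CcF_ring {\<lambda>x. 1 - chi_singleton \<alpha> x}"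
    by (simp add: vanishing_ideal_eq_PIdl cgenideal_eq_genideal one_minus_chi_singleton_in_CcF)
  then show "let M = {f \<in> CcF. f \<alpha> = 0}; e = (\<lambda>x. 1 - chi_singleton \<alpha> x) in
            maximalideal M CcF_ring \<and> e \<in> CcF \<and>
            e \<otimes>\<^bsub>CcF_ring\<^esub> e = e \<and> M = genideal CcF_ring {e}"
    unfolding Let_def
    using maximalideal_vanishing one_minus_chi_singleton_in_CcF one_minus_chi_singleton_idem
    by blast
next
  fix P :: "('a \<Rightarrow> real) set"
  assume "primeideal P CcF_ring \<and> \<not> maximalideal P CcF_ring"
  then show "essential_ideal CcF_ring P"
    using essential_ideal_if_all_chi_singleton chi_singleton_in_nonmaximal_prime
    by (metis primeideal.axioms(1))
qed

end
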